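(* Let $X$ be a discrete random variable with alphabet $\mathcal{X}$ and law $p_X$, let $f:\mathcal{X}\to\mathcal{Y}$ be a deterministic function (the encoder), and let $Y=f(X)$ (the bitstream). Let $\hat{X}=g(Y)$ be a reconstruction produced by a (possibly stochastic) decoder $g$ such that, conditionally on $Y$, $\hat{X}$ is distributed according to the posterior $p_{X|Y}$, i.e. for every $y$ with $p_Y(Y=y)\neq 0$, $\hat{X}$ given $Y=y$ has law $p_{X|Y}(\cdot\mid Y=y)$. Then $f(\hat{X})=Y$ almost surely.
   Context: Such a codec (deterministic encoder, decoder sampling from the posterior of the source given the code) is called a conditional generative model-based image codec. A codec is called idempotent if re-encoding the reconstruction gives back the same code, i.e. $f(\hat{X})=Y$. *)

theory Defs
  imports "HOL-Probability.Probability"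
begin

definition code_law :: "'a pmf \<Rightarrow> ('a \<Rightarrow> 'b) \<Rightarrow> 'b pmf" where
  "code_law p f = map_pmf f p"

text \<open>Posterior law of X given Y = y (meaningful when P(Y = y) is nonzero).\<close>
definition posterior :: "'a pmf \<Rightarrow> ('a \<Rightarrow> 'b) \<Rightarrow> 'b \<Rightarrow> 'a pmf" where
  "posterior p f y = cond_pmf p (f -` {y})"

definition code_recon_law :: "'a pmf \<Rightarrow> ('a \<Rightarrow> 'b) \<Rightarrow> ('b \<Rightarrow> 'a pmf) \<Rightarrow> ('b \<times> 'a) pmf" where
  "code_recon_law p f g = bind_pmf (code_law p f) (\<lambda>y. map_pmf (\<lambda>xh. (y, xh)) (g y))"

end

theory Submission
  imports Defs
begin

text \<open>The decoder only ever sees codes y that occur with positive probability, and for those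
  it samples from the posterior, whose support is the fibre of f over y; hence every
  reconstruction is re-encoded to y.\<close>

lemma set_pmf_code_law: "set_pmf (code_law p f) = f ` set_pmf p"
  by (simp add: code_law_def)

lemma set_pmf_posterior:
  assumes "y \<in> set_pmf (code_law p f)"
  shows "set_pmf (posterior p f y) = set_pmf p \<inter> f -` {y}"
proof -
  have "set_pmf p \<inter> f -` {y} \<noteq> {}"
    using assms by (auto simp: set_pmf_code_law)
  then show ?thesis
    by (simp add: posterior_def set_cond_pmf)
qed

lemma set_pmf_code_recon_law:
  "set_pmf (code_recon_law p f g) = (SIGMA y:set_pmf (code_law p f). set_pmf (g y))"
  by (auto simp: code_recon_law_def)

theorem theorem1:
  fixes p :: "'a pmf" and f :: "'a \<Rightarrow> 'b" and g :: "'b \<Rightarrow> 'a pmf"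
  assumes "\<And>y. pmf (code_law p f) y \<noteq> 0 \<Longrightarrow> g y = posterior p f y"
  shows "AE (y, xh) in measure_pmf (code_recon_law p f g). f xh = y"
proof (rule AE_pmfI, clarify)
  fix y xh
  assume "(y, xh) \<in> set_pmf (code_recon_law p f g)"
  then have y: "y \<in> set_pmf (code_law p f)" and xh: "xh \<in> set_pmf (g y)"
    by (auto simp: set_pmf_code_recon_law)
  have "g y = posterior p f y"
    using assms y by (simp add: set_pmf_iff)
  with xh y show "f xh = y"
    by (simp add: set_pmf_posterior)
qed

end
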